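(* Let $C \subseteq \mathbb{F}_q^n$ be an arbitrary subspace over the finite field $\mathbb{F}_q$. Then $C$ is $\left(1+\frac{1}{q}\right)$-non-overlapping.
   Context: For a subspace $C \ne \{0\}$, $d(C) := \min_{u \in C\setminus\{0\}}\|u\|_0$, where $\|u\|_0$ is the number of nonzero coordinates. A subspace $C$ is $\alpha$-non-overlapping ($\alpha \ge 1$) if for any $u, v \in C$ linearly independent over $\mathbb{F}_q$, $|\mathrm{supp}(u)\cup\mathrm{supp}(v)| \ge \alpha\cdot d(C)$, where $\mathrm{supp}(u)$ is the set of nonzero coordinates of $u$. *)

theory Defs
  imports "HOL-Analysis.Analysis"
begin

definition supp :: "'a::zero ^ 'n \<Rightarrow> 'n set" where
  "supp u = {i. u $ i \<noteq> 0}"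

definition hamming_weight :: "'a::zero ^ 'n \<Rightarrow> nat" where
  "hamming_weight u = card (supp u)"

definition min_dist :: "('a::zero ^ 'n) set \<Rightarrow> nat" where
  "min_dist C = Min (hamming_weight ` (C - {0}))"

definition non_overlapping :: "real \<Rightarrow> ('a::field ^ 'n::finite) set \<Rightarrow> bool" where
  "non_overlapping \<alpha> C \<longleftrightarrow>
     (\<forall>u\<in>C. \<forall>v\<in>C. (u \<noteq> v \<and> vec.independent {u, v}) \<longrightarrow>
        real (card (supp u \<union> supp v)) \<ge> \<alpha> * real (min_dist C))"

end

theory Submission
  imports Defs
begin

text \<open>Let \<open>u, v \<in> C\<close> be independent, \<open>S = supp u \<union> supp v\<close> and \<open>q = |\<FF>\<^sub>q|\<close>.
  The \<open>q\<^sup>2 - 1\<close> nontrivial combinations \<open>a u + b v\<close> are nonzero codewords, so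
  their weights add up to at least \<open>(q\<^sup>2 - 1) d(C)\<close>. Counting the other way, a
  coordinate \<open>i \<in> S\<close> is nonzero in exactly \<open>q\<^sup>2 - q\<close> of all \<open>q\<^sup>2\<close> combinations,
  since \<open>(a, b) \<mapsto> a u\<^sub>i + b v\<^sub>i\<close> is a nonzero linear form on \<open>\<FF>\<^sub>q\<^sup>2\<close>. Hence
  \<open>(q\<^sup>2 - 1) d(C) \<le> (q\<^sup>2 - q) |S|\<close>, i.e. \<open>|S| \<ge> (1 + 1/q) d(C)\<close>.\<close>

lemma card_linear_form_zeros:
  fixes x y :: "'a::{finite,field}"
  assumes "x \<noteq> 0 \<or> y \<noteq> 0"
  shows "card {(a, b). a * x + b * y = 0} = CARD('a)"
proof (cases "x = 0")
  case True
  with assms have "{(a, b). a * x + b * y = 0} = (\<lambda>a. (a, 0)) ` UNIV"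
    by auto
  then show ?thesis
    by (simp add: card_image inj_def)
next
  case False
  then have "{(a, b). a * x + b * y = 0} = (\<lambda>b. (- b * y / x, b)) ` UNIV"
    by (auto simp: field_simps add_eq_0_iff image_iff)
  then show ?thesis
    by (simp add: card_image inj_def)
qed

lemma card_linear_form_nonzeros:
  fixes x y :: "'a::{finite,field}"
  assumes "x \<noteq> 0 \<or> y \<noteq> 0"
  shows "card {(a, b). a * x + b * y \<noteq> 0} = CARD('a) * CARD('a) - CARD('a)"
proof -
  have "{(a, b). a * x + b * y \<noteq> 0} = UNIV - {(a, b). a * x + b * y = 0}"
    by auto
  then show ?thesis
    using card_linear_form_zeros[OF assms] by (simp add: card_Diff_subset card_prod)
qed

lemma independent_pair_combination_eq_0:
  fixes u v :: "'a::field ^ 'n"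
  assumes "u \<noteq> v" and "vec.independent {u, v}" and "a *s u + b *s v = 0"
  shows "a = 0 \<and> b = 0"
proof -
  have "v \<noteq> 0" and u_notin: "u \<notin> vec.span {v}"
    using assms(1,2) vec.dependent_zero by (auto simp: vec.independent_insert)
  show ?thesis
  proof (cases "a = 0")
    case True
    then show ?thesis
      using assms(3) \<open>v \<noteq> 0\<close> by simp
  next
    case False
    then have "u = (- b / a) *s v"
      using assms(3) by (auto simp: vec_eq_iff field_simps add_eq_0_iff)
    then have "u \<in> vec.span {v}"
      unfolding vec.span_singleton by blast
    with u_notin show ?thesis
      by contradiction
  qed
qed

lemma min_dist_le_hamming_weight:
  fixes w :: "'a::zero ^ 'n::finite"
  assumes "w \<in> C" and "w \<noteq> 0"
  shows "min_dist C \<le> hamming_weight w"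
proof -
  have "hamming_weight ` (C - {0}) \<subseteq> {..CARD('n)}"
    by (auto simp: hamming_weight_def card_mono)
  then show ?thesis
    unfolding min_dist_def using assms by (auto intro: Min_le finite_subset)
qed

lemma sum_hamming_weight_combinations:
  fixes u v :: "'a::{finite,field} ^ 'n::finite"
  shows "(\<Sum>(a, b)\<in>UNIV. hamming_weight (a *s u + b *s v))
    = card (supp u \<union> supp v) * (CARD('a) * CARD('a) - CARD('a))"
proof -
  let ?S = "supp u \<union> supp v"
  have "(\<Sum>(a, b)\<in>UNIV. hamming_weight (a *s u + b *s v))
      = (\<Sum>(a, b)\<in>UNIV. \<Sum>i\<in>?S. if a * u $ i + b * v $ i \<noteq> 0 then 1 else 0)"
  proof (intro sum.cong refl, clarify)
    fix a b :: 'a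
    have "supp (a *s u + b *s v) = {i \<in> ?S. a * u $ i + b * v $ i \<noteq> 0}"
      by (auto simp: supp_def)
    then show "hamming_weight (a *s u + b *s v)
        = (\<Sum>i\<in>?S. if a * u $ i + b * v $ i \<noteq> 0 then 1 else 0)"
      by (simp add: hamming_weight_def sum.If_cases Int_def)
  qed
  also have "\<dots> = (\<Sum>i\<in>?S. \<Sum>(a, b)\<in>UNIV. if a * u $ i + b * v $ i \<noteq> 0 then 1 else 0)"
    by (subst sum.swap) (simp add: case_prod_beta)
  also have "\<dots> = (\<Sum>i\<in>?S. CARD('a) * CARD('a) - CARD('a))"
  proof (intro sum.cong refl)
    fix i assume "i \<in> ?S"
    then have "u $ i \<noteq> 0 \<or> v $ i \<noteq> 0"
      by (auto simp: supp_def)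
    then show "(\<Sum>(a, b)\<in>UNIV. if a * u $ i + b * v $ i \<noteq> 0 then 1 else 0)
        = CARD('a) * CARD('a) - CARD('a)"
      using card_linear_form_nonzeros by (simp add: sum.If_cases split_def)
  qed
  finally show ?thesis
    by simp
qed

lemma min_dist_bound_independent_pair:
  fixes C :: "('a::{finite,field} ^ 'n::finite) set"
  assumes "vec.subspace C" and "u \<in> C" and "v \<in> C" and "u \<noteq> v" and "vec.independent {u, v}"
  shows "(CARD('a) * CARD('a) - 1) * min_dist C
    \<le> card (supp u \<union> supp v) * (CARD('a) * CARD('a) - CARD('a))"
proof -
  have "(CARD('a) * CARD('a) - 1) * min_dist C = (\<Sum>p\<in>UNIV - {(0::'a, 0::'a)}. min_dist C)"
    by (simp add: card_Diff_subset card_prod)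
  also have "\<dots> \<le> (\<Sum>(a, b)\<in>UNIV - {(0, 0)}. hamming_weight (a *s u + b *s v))"
  proof (intro sum_mono)
    fix p :: "'a \<times> 'a"
    assume "p \<in> UNIV - {(0, 0)}"
    moreover obtain a b where "p = (a, b)"
      by fastforce
    ultimately show "min_dist C \<le> (case p of (a, b) \<Rightarrow> hamming_weight (a *s u + b *s v))"
      using assms independent_pair_combination_eq_0[OF assms(4,5), of a b]
      by (auto intro!: min_dist_le_hamming_weight vec.subspace_add vec.subspace_scale)
  qed
  also have "\<dots> \<le> (\<Sum>(a, b)\<in>UNIV. hamming_weight (a *s u + b *s v))"
    by (intro sum_mono2) auto
  also have "\<dots> = card (supp u \<union> supp v) * (CARD('a) * CARD('a) - CARD('a))"
    by (rule sum_hamming_weight_combinations)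
  finally show ?thesis .
qed

theorem lemma2p6:
  fixes C :: "('a::{finite, field} ^ 'n::finite) set"
  assumes "vec.subspace C"
  shows "non_overlapping (1 + 1 / real CARD('a)) C"
  unfolding non_overlapping_def
proof (intro ballI impI, elim conjE)
  fix u v assume "u \<in> C" "v \<in> C" "u \<noteq> v" "vec.independent {u, v}"
  define q where "q = CARD('a)"
  define d where "d = min_dist C"
  define s where "s = card (supp u \<union> supp v)"
  have "q \<ge> 2"
    unfolding q_def using card_mono[of "UNIV::'a set" "{0, 1}"] by simp
  have "(q * q - 1) * d \<le> s * (q * q - q)"
    using min_dist_bound_independent_pair[OF assms \<open>u \<in> C\<close> \<open>v \<in> C\<close> \<open>u \<noteq> v\<close> \<open>vec.independent {u, v}\<close>]
    unfolding q_def d_def s_def .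
  then have "real ((q * q - 1) * d) \<le> real (s * (q * q - q))"
    by (simp only: of_nat_le_iff)
  moreover have "1 \<le> q * q" "q \<le> q * q"
    using \<open>q \<ge> 2\<close> by (simp_all add: Suc_le_eq)
  ultimately have "(real q - 1) * ((real q + 1) * d) \<le> (real q - 1) * (s * real q)"
    by (simp add: of_nat_diff algebra_simps)
  then have "(real q + 1) * d \<le> s * real q"
    using \<open>q \<ge> 2\<close> by (simp add: mult_le_cancel_left_pos)
  with \<open>q \<ge> 2\<close> show "(1 + 1 / real CARD('a)) * real (min_dist C) \<le> real (card (supp u \<union> supp v))"
    unfolding q_def[symmetric] d_def[symmetric] s_def[symmetric] by (simp add: field_simps)
qed

end
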